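(* For every nonnegative integer $n$, $$\sum_{k=0}^{\infty}(-1)^k(4k+1)\,\frac{(-3n)_k\,(-2n+\tfrac16)_k\,(\tfrac12)_k}{k!\,(2n+\tfrac43)_k\,(3n+\tfrac32)_k}=\left(\frac{2^2 3^3}{5^5}\right)^n\frac{(\tfrac56)_n(\tfrac12)_n(\tfrac76)_n^2}{(\tfrac{7}{15})_n(\tfrac{13}{15})_n(\tfrac{16}{15})_n(\tfrac{4}{15})_n}.$$ (The sum is finite, since $(-3n)_k=0$ for $k>3n$.)
   Context: $(a)_j=\Gamma(a+j)/\Gamma(a)=a(a+1)\cdots(a+j-1)$ denotes the rising factorial (Pochhammer symbol), with $(a)_0=1$. *)

theory Defs
  imports "HOL-Analysis.Analysis"
begin

end

theory Submission
  imports Defs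
begin

(* Proof by the Wilf-Zeilberger (creative telescoping) method.
   Write F(x,k) for the summand with the parameter n replaced by a real x >= 0,
   and H(x,k) for the hypergeometric term with parameters
   (-3x-3, -2x-11/6, 1/2; 2x+10/3, 3x+7/2).  By shifting Pochhammer parameters,
   F(x+1,k) and F(x,k) are both H(x,k) times explicit rational functions of x and k.
   With G(x,k) = H(x,k) k Q(x,k) / (60 K(x)), Q an explicit polynomial certificate,
   a single polynomial identity yields the WZ relation
       D(x) F(x+1,k) - N(x) F(x,k) = G(x,k+1) - G(x,k),
   with D(x) = (15x+7)(15x+13)(15x+16)(15x+4), N(x) = 81/20 (6x+5)(2x+1)(6x+7)^2.
   For x = n all terms vanish for k > 3n+3, so summing over k telescopes to
   D(n) S(n+1) = N(n) S(n), where S(n) is the sum.  The right-hand side satisfies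
   the same first order recurrence and both equal 1 at n = 0.
   The file develops: Pochhammer shifts, the generic term H and its shift rules,
   two abstract summation facts, the specific terms and the WZ identity, the
   recurrence for the closed form, and finally the theorem. *)

lemma pochhammer_shift:
  "pochhammer (a::'a::comm_semiring_1) k * pochhammer (a + of_nat k) m
     = pochhammer a m * pochhammer (a + of_nat m) k"
  by (metis add.commute pochhammer_product')

lemma pochhammer_shift_div:
  fixes a :: "'a::field"
  assumes "pochhammer a m \<noteq> 0"
  shows "pochhammer (a + of_nat m) k = pochhammer a k * pochhammer (a + of_nat k) m / pochhammer a m"
  using pochhammer_shift[of a k m] assms by (simp add: eq_divide_eq mult.commute)

lemma pochhammer_2: "pochhammer (a::'a::comm_semiring_1) 2 = a * (a + 1)"
  by (simp add: numeral_2_eq_2 pochhammer_Suc algebra_simps)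

lemma pochhammer_3: "pochhammer (a::'a::comm_semiring_1) 3 = a * (a + 1) * (a + 2)"
  by (simp add: numeral_3_eq_3 pochhammer_Suc algebra_simps)

definition hterm :: "real \<Rightarrow> real \<Rightarrow> real \<Rightarrow> real \<Rightarrow> real \<Rightarrow> nat \<Rightarrow> real" where
  "hterm a b c d e k = (-1) ^ k * (pochhammer a k * pochhammer b k * pochhammer c k)
     / (fact k * pochhammer d k * pochhammer e k)"

lemma hterm_shift_first:
  assumes "pochhammer a m \<noteq> 0"
  shows "hterm (a + of_nat m) b c d e k
           = pochhammer (a + of_nat k) m / pochhammer a m * hterm a b c d e k"
  unfolding hterm_def pochhammer_shift_div[OF assms] by (simp add: ac_simps)

lemma hterm_shift_second:
  assumes "pochhammer b m \<noteq> 0"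
  shows "hterm a (b + of_nat m) c d e k
           = pochhammer (b + of_nat k) m / pochhammer b m * hterm a b c d e k"
  unfolding hterm_def pochhammer_shift_div[OF assms] by (simp add: ac_simps)

lemma hterm_shift_fourth:
  assumes "pochhammer d m \<noteq> 0" and "pochhammer (d + of_nat k) m \<noteq> 0"
  shows "hterm a b c d e k
           = pochhammer (d + of_nat k) m / pochhammer d m * hterm a b c (d + of_nat m) e k"
  using assms unfolding hterm_def pochhammer_shift_div[OF assms(1)]
  by (simp add: divide_inverse inverse_mult_distrib ac_simps)

lemma hterm_shift_fifth:
  assumes "pochhammer e m \<noteq> 0" and "pochhammer (e + of_nat k) m \<noteq> 0"
  shows "hterm a b c d e k
           = pochhammer (e + of_nat k) m / pochhammer e m * hterm a b c d (e + of_nat m) k"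
  using assms unfolding hterm_def pochhammer_shift_div[OF assms(1)]
  by (simp add: divide_inverse inverse_mult_distrib ac_simps)

lemma hterm_Suc:
  "hterm a b c d e (Suc k) = - ((a + real k) * (b + real k) * (c + real k))
     / ((real k + 1) * (d + real k) * (e + real k)) * hterm a b c d e k"
  unfolding hterm_def pochhammer_Suc fact_Suc
  by (simp add: divide_inverse inverse_mult_distrib ac_simps)

lemma hterm_vanishes:
  assumes "k > N"
  shows "hterm (- of_nat N) b c d e k = 0"
  unfolding hterm_def using pochhammer_of_nat_eq_0_lemma[OF assms, where 'a=real] by simp

lemma telescoping_sums:
  fixes f g G :: "nat \<Rightarrow> 'a::real_normed_field"
  assumes cert: "\<And>k. a * f k - b * g k = G (Suc k) - G k"
    and f0: "\<And>k. k \<ge> m \<Longrightarrow> f k = 0" and g0: "\<And>k. k \<ge> m \<Longrightarrow> g k = 0"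
    and "G 0 = 0" "G m = 0"
  shows "a * suminf f = b * suminf g"
proof -
  have "suminf f = sum f {..<m}" "suminf g = sum g {..<m}"
    by (auto intro!: suminf_finite f0 g0)
  moreover have "a * sum f {..<m} - b * sum g {..<m} = (\<Sum>k<m. G (Suc k) - G k)"
    by (simp only: sum_distrib_left sum_subtractf[symmetric] cert)
  moreover have "(\<Sum>k<m. G (Suc k) - G k) = G m - G 0"
    by (rule sum_lessThan_telescope)
  ultimately show ?thesis using assms(4,5) by simp
qed

lemma recurrence_unique:
  fixes f g :: "nat \<Rightarrow> 'a::field"
  assumes "\<And>n. d n \<noteq> 0"
    and "\<And>n. d n * f (Suc n) = e n * f n" and "\<And>n. d n * g (Suc n) = e n * g n"
    and "f 0 = g 0"
  shows "f n = g n"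
proof (induction n)
  case 0
  show ?case using assms(4) .
next
  case (Suc n)
  have "d n * f (Suc n) = d n * g (Suc n)" using assms(2,3) Suc.IH by simp
  then show ?case using assms(1) by simp
qed

definition summand :: "real \<Rightarrow> nat \<Rightarrow> real" where
  "summand x k = (4 * real k + 1) * hterm (- 3 * x) (- 2 * x + 1/6) (1/2) (2 * x + 4/3) (3 * x + 3/2) k"

(* The term H(x,k) in terms of which F(x,k), F(x+1,k) and the certificate are expressed. *)
definition companion :: "real \<Rightarrow> nat \<Rightarrow> real" where
  "companion x k = hterm (- 3 * x - 3) (- 2 * x - 11/6) (1/2) (2 * x + 10/3) (3 * x + 7/2) k"

lemma summand_explicit:
  "summand x k = (-1::real) ^ k * (4 * real k + 1) *
     (pochhammer (- 3 * x) k * pochhammer (- 2 * x + 1/6) k * pochhammer (1/2) k)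
     / (fact k * pochhammer (2 * x + 4/3) k * pochhammer (3 * x + 3/2) k)"
  unfolding summand_def hterm_def by (simp add: ac_simps)

(* F(x+1,k) differs from H(x,k) only in the last lower parameter. *)
lemma summand_shift:
  assumes "x \<ge> 0"
  shows "summand (x + 1) k = (4 * real k + 1) * (3 * x + 7/2) / (3 * x + 7/2 + real k) * companion x k"
proof -
  define H where "H = hterm (- 3 * x - 3) (- 2 * x - 11/6) (1/2) (2 * x + 10/3) (3 * x + 7/2 + of_nat 1) k"
  have "- 3 * (x + 1) = - 3 * x - 3" "- 2 * (x + 1) + 1/6 = - 2 * x - 11/6"
    "2 * (x + 1) + 4/3 = 2 * x + 10/3" "3 * (x + 1) + 3/2 = 3 * x + 7/2 + of_nat 1"
    by simp_all
  then have summand_H: "summand (x + 1) k = (4 * real k + 1) * H"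
    unfolding summand_def H_def by presburger
  have "companion x k = pochhammer (3 * x + 7/2 + real k) 1 / pochhammer (3 * x + 7/2) 1 * H"
    unfolding companion_def H_def using assms by (intro hterm_shift_fifth) auto
  moreover have "3 * x + 7/2 > 0" "3 * x + 7/2 + real k > 0" using assms by auto
  ultimately have "H = (3 * x + 7/2) / (3 * x + 7/2 + real k) * companion x k"
    by (simp add: field_simps)
  then show ?thesis unfolding summand_H by simp
qed

(* F(x,k) arises from H(x,k) by shifting all four parameters involving x. *)
lemma summand_base:
  assumes "x \<ge> 0"
  shows "summand x k = (4 * real k + 1)
     * pochhammer (- 3 * x - 3 + real k) 3 / pochhammer (- 3 * x - 3) 3
     * pochhammer (- 2 * x - 11/6 + real k) 2 / pochhammer (- 2 * x - 11/6) 2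
     * pochhammer (2 * x + 4/3 + real k) 2 / pochhammer (2 * x + 4/3) 2
     * pochhammer (3 * x + 3/2 + real k) 2 / pochhammer (3 * x + 3/2) 2
     * companion x k"
proof -
  have lower: "pochhammer (2 * x + 4/3) 2 \<noteq> 0" "pochhammer (2 * x + 4/3 + real k) 2 \<noteq> 0"
    "pochhammer (3 * x + 3/2) 2 \<noteq> 0" "pochhammer (3 * x + 3/2 + real k) 2 \<noteq> 0"
    using assms by (auto simp: pochhammer_2)
  have upper: "pochhammer (- 3 * x - 3) 3 \<noteq> 0" "pochhammer (- 2 * x - 11/6) 2 \<noteq> 0"
    using assms by (auto simp: pochhammer_2 pochhammer_3)
  have args: "- 3 * x - 3 + of_nat 3 = - 3 * x" "- 2 * x - 11/6 + of_nat 2 = - 2 * x + 1/6"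
    "2 * x + 4/3 + of_nat 2 = 2 * x + 10/3" "3 * x + 3/2 + of_nat 2 = 3 * x + 7/2"
    by simp_all
  have "hterm (- 3 * x) (- 2 * x + 1/6) (1/2) (2 * x + 4/3) (3 * x + 3/2) k
     = pochhammer (- 3 * x - 3 + real k) 3 / pochhammer (- 3 * x - 3) 3
       * hterm (- 3 * x - 3) (- 2 * x + 1/6) (1/2) (2 * x + 4/3) (3 * x + 3/2) k"
    using hterm_shift_first[OF upper(1)] by (simp only: args)
  also have "hterm (- 3 * x - 3) (- 2 * x + 1/6) (1/2) (2 * x + 4/3) (3 * x + 3/2) k
     = pochhammer (- 2 * x - 11/6 + real k) 2 / pochhammer (- 2 * x - 11/6) 2
       * hterm (- 3 * x - 3) (- 2 * x - 11/6) (1/2) (2 * x + 4/3) (3 * x + 3/2) k"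
    using hterm_shift_second[OF upper(2)] by (simp only: args)
  also have "hterm (- 3 * x - 3) (- 2 * x - 11/6) (1/2) (2 * x + 4/3) (3 * x + 3/2) k
     = pochhammer (2 * x + 4/3 + real k) 2 / pochhammer (2 * x + 4/3) 2
       * hterm (- 3 * x - 3) (- 2 * x - 11/6) (1/2) (2 * x + 10/3) (3 * x + 3/2) k"
    using hterm_shift_fourth[OF lower(1,2)] by (simp only: args)
  also have "hterm (- 3 * x - 3) (- 2 * x - 11/6) (1/2) (2 * x + 10/3) (3 * x + 3/2) k
     = pochhammer (3 * x + 3/2 + real k) 2 / pochhammer (3 * x + 3/2) 2 * companion x k"
    unfolding companion_def using hterm_shift_fifth[OF lower(3,4)] by (simp only: args)
  finally show ?thesis unfolding summand_def by (simp add: ac_simps)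
qed

lemma companion_Suc:
  "companion x (Suc k) = - ((- 3 * x - 3 + real k) * (- 2 * x - 11/6 + real k) * (1/2 + real k))
     / ((real k + 1) * (2 * x + 10/3 + real k) * (3 * x + 7/2 + real k)) * companion x k"
  unfolding companion_def by (rule hterm_Suc)

(* For x = n the upper parameters -3n and -3n-3 make both terms finitely supported. *)
lemma summand_vanishes:
  assumes "k > 3 * n"
  shows "summand (real n) k = 0"
  using hterm_vanishes[OF assms] unfolding summand_def by simp

lemma companion_vanishes:
  assumes "k > 3 * n + 3"
  shows "companion (real n) k = 0"
proof -
  have "- 3 * real n - 3 = - of_nat (3 * n + 3)" by simp
  then show ?thesis using hterm_vanishes[OF assms] unfolding companion_def by presburger
qed

(* Leading and trailing coefficients of the recurrence D(x) S(x+1) = N(x) S(x). *)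
definition rec_den :: "real \<Rightarrow> real" where
  "rec_den x = (15 * x + 7) * (15 * x + 13) * (15 * x + 16) * (15 * x + 4)"

definition rec_num :: "real \<Rightarrow> real" where
  "rec_num x = 81/20 * (6 * x + 5) * (2 * x + 1) * (6 * x + 7)^2"

(* Denominator K(x) and numerator polynomial Q(x,k) of the certificate, as produced by
   creative telescoping (Zeilberger's algorithm). *)
definition cert_den :: "real \<Rightarrow> real" where
  "cert_den x = (x + 1) * (3 * x + 1) * (3 * x + 2)^2 * (12 * x + 5) * (12 * x + 11)"

definition cert_poly :: "real \<Rightarrow> real \<Rightarrow> real" where
  "cert_poly x y = ((- 230376440) + x * ((- 4127770248) + x * ((- 32259380058) + x * ((- 145061030682) + x * ((- 416238183648) + x * ((- 797353950168) + x * ((- 1033879370688) + x * ((- 896951213208) + x * ((- 498790524672) + x * ((- 160707128544) + x * ((- 22803306624)))))))))))) + y * (((- 148932966) + x * ((- 2347545681) + x * ((- 16158535749) + x * ((- 63609743556) + x * ((- 157710222180) + x * ((- 255363381216) + x * ((- 270089653608) + x * ((- 179996416056) + x * ((- 68611788720) + x * ((- 11401653312))))))))))) + y * (((68653515) + x * ((972884520) + x * ((5848635996) + x * ((19537807338) + x * ((39730937400) + x * ((50423442840) + x * ((39041291736) + x * ((16876046736) + x * ((3120306624)))))))))) + y * (((78533595) + x * ((843217155) + x * ((3923826705) + x * ((10158086232) + x * ((15712521912) + x * ((14462491032) + x * ((7310633616) + x * ((1560153312))))))))) + y * (((- 17630739) + x * ((- 187271028) + x * ((- 781594434) + x * ((-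 1680946668) + x * ((- 1979672400) + x * ((- 1214362368) + x * ((- 302750784)))))))) + y * (((- 27075573) + x * ((- 183875022) + x * ((- 518031288) + x * ((- 740716488) + x * ((- 532088352) + x * ((- 151375392))))))) + y * (((2236248) + x * ((17429904) + x * ((43547544) + x * ((46014480) + x * ((17216064)))))) + y * (((4340952) + x * ((15641424) + x * ((20260368) + x * ((8608032))))) + y * (((- 81648) + x * ((- 559872) + x * ((- 419904)))) + y * (((- 244944) + x * ((- 209952))))))))))))"

(* The WZ relation divided by H(x,k) and cleared of denominators. *)
lemma certificate_polynomial_identity:
  fixes x y :: real
  shows "60 * cert_den x * rec_den x * (4 * y + 1) * (3 * x + 7/2) * (2 * x + 10/3 + y)
     + 17496 * (6 * x + 7) * (4 * y + 1)
       * (pochhammer (- 3 * x - 3 + y) 3 * pochhammer (- 2 * x - 11/6 + y) 2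
          * pochhammer (2 * x + 4/3 + y) 2 * pochhammer (3 * x + 3/2 + y) 2)
       * (2 * x + 10/3 + y) * (3 * x + 7/2 + y)
   = - ((- 3 * x - 3 + y) * (- 2 * x - 11/6 + y) * (1/2 + y)) * cert_poly x (y + 1)
     - y * cert_poly x y * (2 * x + 10/3 + y) * (3 * x + 7/2 + y)"
  unfolding pochhammer_2 pochhammer_3 rec_den_def cert_den_def cert_poly_def by algebra

(* The WZ relation divided by H(x,k), as an identity of rational functions. *)
lemma wz_rational_identity:
  fixes x y :: real
  assumes "x \<ge> 0" "y \<ge> 0"
  shows "rec_den x * ((4 * y + 1) * (3 * x + 7/2) / (3 * x + 7/2 + y))
     - rec_num x * ((4 * y + 1)
        * pochhammer (- 3 * x - 3 + y) 3 / pochhammer (- 3 * x - 3) 3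
        * pochhammer (- 2 * x - 11/6 + y) 2 / pochhammer (- 2 * x - 11/6) 2
        * pochhammer (2 * x + 4/3 + y) 2 / pochhammer (2 * x + 4/3) 2
        * pochhammer (3 * x + 3/2 + y) 2 / pochhammer (3 * x + 3/2) 2)
   = - ((- 3 * x - 3 + y) * (- 2 * x - 11/6 + y) * (1/2 + y))
        / ((y + 1) * (2 * x + 10/3 + y) * (3 * x + 7/2 + y))
        * (y + 1) * cert_poly x (y + 1) / (60 * cert_den x)
     - y * cert_poly x y / (60 * cert_den x)"
    (is "rec_den x * ?a - rec_num x * ?b = ?r")
proof -
  define W where "W = 60 * cert_den x * (2 * x + 10/3 + y) * (3 * x + 7/2 + y)"
  define M where "M = pochhammer (- 3 * x - 3 + y) 3 * pochhammer (- 2 * x - 11/6 + y) 2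
          * pochhammer (2 * x + 4/3 + y) 2 * pochhammer (3 * x + 3/2 + y) 2"
  define L where "L = (6 * x + 7) * (2 * x + 1) * (6 * x + 5)"
  have pos: "3 * x + 7/2 + y > 0" "2 * x + 10/3 + y > 0" "y + 1 > 0" "cert_den x > 0" "L > 0"
    using assms by (auto simp: cert_den_def L_def)
  have "?b = (4 * y + 1) * M / (pochhammer (- 3 * x - 3) 3 * pochhammer (- 2 * x - 11/6) 2
        * pochhammer (2 * x + 4/3) 2 * pochhammer (3 * x + 3/2) 2)"
    unfolding M_def by simp
  also have "pochhammer (- 3 * x - 3) 3 * pochhammer (- 2 * x - 11/6) 2
        * pochhammer (2 * x + 4/3) 2 * pochhammer (3 * x + 3/2) 2 = - cert_den x * L / 72"
    unfolding pochhammer_2 pochhammer_3 cert_den_def L_def by (simp add: field_simps power2_eq_square)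
  finally have b_eq: "?b = (4 * y + 1) * M / (- cert_den x * L / 72)" .
  have rec_num_L: "rec_num x = 81/20 * (6 * x + 7) * L"
    unfolding rec_num_def L_def by algebra
  have bW: "rec_num x * ?b * W
      = - (17496 * (6 * x + 7) * (4 * y + 1) * M * (2 * x + 10/3 + y) * (3 * x + 7/2 + y))"
    unfolding rec_num_L b_eq W_def using pos by (simp add: field_simps)
  have aW: "rec_den x * ?a * W
      = 60 * cert_den x * rec_den x * (4 * y + 1) * (3 * x + 7/2) * (2 * x + 10/3 + y)"
    unfolding W_def using pos by (simp add: field_simps)
  have rW: "?r * W = - ((- 3 * x - 3 + y) * (- 2 * x - 11/6 + y) * (1/2 + y)) * cert_poly x (y + 1)
     - y * cert_poly x y * (2 * x + 10/3 + y) * (3 * x + 7/2 + y)"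
    unfolding W_def using pos by (simp add: divide_simps) algebra
  have "(rec_den x * ?a - rec_num x * ?b) * W = ?r * W"
    using aW bW rW certificate_polynomial_identity[of x y] unfolding M_def
    by (simp only: left_diff_distrib diff_minus_eq_add)
  moreover have "W \<noteq> 0" unfolding W_def using pos by simp
  ultimately show ?thesis by simp
qed

definition certificate :: "real \<Rightarrow> nat \<Rightarrow> real" where
  "certificate x k = companion x k * real k * cert_poly x (real k) / (60 * cert_den x)"

lemma wz_identity:
  assumes "x \<ge> 0"
  shows "rec_den x * summand (x + 1) k - rec_num x * summand x k
           = certificate x (Suc k) - certificate x k"
proof -
  have "rec_den x * summand (x + 1) k - rec_num x * summand x k
      = (rec_den x * ((4 * real k + 1) * (3 * x + 7/2) / (3 * x + 7/2 + real k))
         - rec_num x * ((4 * real k + 1)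
            * pochhammer (- 3 * x - 3 + real k) 3 / pochhammer (- 3 * x - 3) 3
            * pochhammer (- 2 * x - 11/6 + real k) 2 / pochhammer (- 2 * x - 11/6) 2
            * pochhammer (2 * x + 4/3 + real k) 2 / pochhammer (2 * x + 4/3) 2
            * pochhammer (3 * x + 3/2 + real k) 2 / pochhammer (3 * x + 3/2) 2)) * companion x k"
    by (simp only: summand_shift[OF assms] summand_base[OF assms] mult.assoc left_diff_distrib)
  also have "\<dots> = certificate x (Suc k) - certificate x k"
    unfolding wz_rational_identity[OF assms of_nat_0_le_iff] certificate_def companion_Suc
    by (simp add: algebra_simps)
  finally show ?thesis .
qed

lemma sum_recurrence:
  "rec_den (real n) * suminf (summand (real (Suc n))) = rec_num (real n) * suminf (summand (real n))"
proof (rule telescoping_sums[where G = "certificate (real n)" and m = "3 * n + 4"])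
  show "rec_den (real n) * summand (real (Suc n)) k - rec_num (real n) * summand (real n) k
          = certificate (real n) (Suc k) - certificate (real n) k" for k
    using wz_identity[of "real n" k] by (simp add: add.commute)
  show "summand (real (Suc n)) k = 0" if "k \<ge> 3 * n + 4" for k
    using summand_vanishes[of "Suc n" k] that by simp
  show "summand (real n) k = 0" if "k \<ge> 3 * n + 4" for k
    using summand_vanishes[of n k] that by simp
  show "certificate (real n) 0 = 0" "certificate (real n) (3 * n + 4) = 0"
    using companion_vanishes[of n "3 * n + 4"] unfolding certificate_def by simp_all
qed

lemma sum_at_zero: "suminf (summand 0) = 1"
proof -
  have "suminf (summand 0) = (\<Sum>k\<in>{0}. summand 0 k)"
    using summand_vanishes[of 0] by (intro suminf_finite) auto
  then show ?thesis by (simp add: summand_def hterm_def)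
qed

definition closed_form :: "nat \<Rightarrow> real" where
  "closed_form n = ((2^2 * 3^3) / 5^5) ^ n *
     (pochhammer (5/6) n * pochhammer (1/2) n * (pochhammer (7/6) n)^2)
     / (pochhammer (7/15) n * pochhammer (13/15) n * pochhammer (16/15) n * pochhammer (4/15) n)"

definition closed_form_ratio :: "real \<Rightarrow> real" where
  "closed_form_ratio x = (2^2 * 3^3) / 5^5 * ((5/6 + x) * (1/2 + x) * (7/6 + x)^2)
     / ((7/15 + x) * (13/15 + x) * (16/15 + x) * (4/15 + x))"

lemma closed_form_product: "closed_form n = (\<Prod>j<n. closed_form_ratio (real j))"
  unfolding closed_form_def closed_form_ratio_def pochhammer_prod atLeast0LessThan
  by (simp add: prod.distrib prod_dividef power_divide flip: prod_power_distrib)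

lemma rec_den_closed_form_ratio:
  fixes x :: real
  assumes "x \<ge> 0"
  shows "rec_den x * closed_form_ratio x = rec_num x"
proof -
  define Q where "Q = (7/15 + x) * (13/15 + x) * (16/15 + x) * (4/15 + x)"
  have "Q > 0" unfolding Q_def using assms by simp
  have "rec_den x = 50625 * Q"
    unfolding rec_den_def Q_def by algebra
  then have "rec_den x * closed_form_ratio x
      = 50625 * ((2^2 * 3^3) / 5^5 * ((5/6 + x) * (1/2 + x) * (7/6 + x)^2))"
    unfolding closed_form_ratio_def Q_def[symmetric] using \<open>Q > 0\<close> by simp
  also have "\<dots> = rec_num x"
    unfolding rec_num_def by algebra
  finally show ?thesis .
qed

lemma closed_form_Suc: "closed_form (Suc n) = closed_form_ratio (real n) * closed_form n"
  unfolding closed_form_product by (simp add: mult.commute)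

lemma closed_form_recurrence:
  "rec_den (real n) * closed_form (Suc n) = rec_num (real n) * closed_form n"
proof -
  have "rec_den (real n) * closed_form_ratio (real n) = rec_num (real n)"
    by (rule rec_den_closed_form_ratio) simp
  then show ?thesis unfolding closed_form_Suc by (simp add: mult.assoc[symmetric])
qed

lemma summation_formula: "suminf (summand (real n)) = closed_form n"
proof (rule recurrence_unique[where d = "\<lambda>n. rec_den (real n)" and e = "\<lambda>n. rec_num (real n)"])
  show "rec_den (real n) \<noteq> 0" for n
    unfolding rec_den_def by simp
  show "rec_den (real n) * suminf (summand (real (Suc n))) = rec_num (real n) * suminf (summand (real n))" for n
    by (rule sum_recurrence)
  show "rec_den (real n) * closed_form (Suc n) = rec_num (real n) * closed_form n" for n
    by (rule closed_form_recurrence)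
  show "suminf (summand (real 0)) = closed_form 0"
    using sum_at_zero by (simp add: closed_form_def)
qed

theorem theorem7:
  fixes n :: nat
  shows "(\<Sum>k. (-1::real) ^ k * (4 * real k + 1) *
            (pochhammer (- 3 * real n) k * pochhammer (- 2 * real n + 1/6) k * pochhammer (1/2) k)
            / (fact k * pochhammer (2 * real n + 4/3) k * pochhammer (3 * real n + 3/2) k))
         = ((2^2 * 3^3) / 5^5) ^ n *
           (pochhammer (5/6) n * pochhammer (1/2) n * (pochhammer (7/6) n)^2)
           / (pochhammer (7/15) n * pochhammer (13/15) n * pochhammer (16/15) n * pochhammer (4/15) n)"
  using summation_formula[of n] unfolding summand_explicit closed_form_def .

end
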